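(* Let $\Phi$ be a natural rational associator. Then $I_\Phi(\tilde K)\in\mathrm{Chord}_{nat}$ for every knot diagram $\tilde K$ (together with its decomposition into elementary pieces).
   Context: $b_p(n)=\big[\frac{p}{(p-1)^2}n-\frac1{p-1}\big]$ ($[\cdot]$ integer part) and $D(n)=\prod_{p\text{ prime},p\le n+1}p^{b_p(n)}$. A rational associator $\Phi\in\mathrm{Assoc}_1(\mathbb{Q})$ (group-like $\Phi\in\mathbb{Q}\langle\!\langle x,y\rangle\!\rangle$ with $\Phi(x,y)=\Phi(y,x)^{-1}$, $e^{x/2}\Phi(z,x)e^{z/2}\Phi(y,z)e^{y/2}\Phi(x,y)=1$ for $x+y+z=0$, and the pentagon $\Phi(t_{1,2},t_{2,3}+t_{2,4})\Phi(t_{1,3}+t_{2,3},t_{3,4})=\Phi(t_{2,3},t_{3,4})\Phi(t_{1,2}+t_{1,3},t_{2,4}+t_{3,4})\Phi(t_{1,2},t_{2,3})$ in the completed group of infinitesimal braids on 4 strands) is natural if $\Phi\in1+\sum_{n\ge1}p^{-b_p(n)}\mathbb{Z}_p\langle x,y\rangle^n$ for every prime $p$. Chord diagrams: oriented circle with disjoint pairs of points joined by chords, up to orientation-preserving diffeomorphism; $\mathrm{Chord}(\mathbb{Q})$ is the completed span modulo the 4T relation and the one-term relation (diagrams with an isolated chord, whose endpoints are adjacent on the circle, vanish), graded by number of chords, with connected-sum product; $\mathrm{Chord}_n(\mathbb{Z})$ the integral lattice in degree $n$; $\mathrm{Chord}_{nat}=\sum_{n\ge0}D(n)^{-1}\mathrm{Chord}_n(\mathbb{Z})$.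 $I_\Phi(\tilde K)$: for a knot diagram $\tilde K$ in general position (transversal simple crossings, height Morse, distinct critical and crossing heights) decomposed into elementary pieces — maxima, minima, positive/negative crossings, and three-strand re-bracketing pieces $c,c^{-1}$ — decorate crossings with $\exp(\pm t/2)$ ($t$ the horizontal chord between the two strands), $c$ with $\Phi(t_{1,2},t_{2,3})$ and $c^{-1}$ with $\Phi(t_{1,2},t_{2,3})^{-1}$ ($t_{i,j}$ the horizontal chord between strands $i,j$), maxima/minima with nothing, with a sign $(-1)^k$ when the orientation of a strand carrying $k$ chord endpoints is reversed; the resulting element of $\mathrm{Chord}(\mathbb{Q})$ is $I_\Phi(\tilde K)$. *)

theory Defs
  imports Complex_Main "HOL-Computational_Algebra.Primes"
begin

section \<open>Noncommutative formal power series over an alphabet 'a (coefficients in Q)\<close>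

type_synonym 'a ser = "'a list \<Rightarrow> rat"

definition ser_one :: "'a ser" where
  "ser_one w = (if w = [] then 1 else 0)"

definition ser_letter :: "'a \<Rightarrow> 'a ser" where
  "ser_letter a w = (if w = [a] then 1 else 0)"

definition ser_word :: "'a list \<Rightarrow> 'a ser" where
  "ser_word u w = (if w = u then 1 else 0)"

definition ser_add :: "'a ser \<Rightarrow> 'a ser \<Rightarrow> 'a ser" where
  "ser_add F G w = F w + G w"

definition ser_diff :: "'a ser \<Rightarrow> 'a ser \<Rightarrow> 'a ser" where
  "ser_diff F G w = F w - G w"

definition ser_scale :: "rat \<Rightarrow> 'a ser \<Rightarrow> 'a ser" where
  "ser_scale c F w = c * F w"

definition ser_mult :: "'a ser \<Rightarrow> 'a ser \<Rightarrow> 'a ser" where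
  "ser_mult F G w = (\<Sum>k\<le>length w. F (take k w) * G (drop k w))"

definition ser_prod :: "'a ser list \<Rightarrow> 'a ser" where
  "ser_prod Fs = foldr ser_mult Fs ser_one"

text \<open>multiplicative inverse (for series with invertible constant term)\<close>
definition ser_inv :: "'a ser \<Rightarrow> 'a ser" where
  "ser_inv F = (THE G. ser_mult F G = ser_one)"

text \<open>exponential of a series without constant term\<close>
definition ser_exp :: "'a ser \<Rightarrow> 'a ser" where
  "ser_exp A w = (\<Sum>k\<le>length w. ser_prod (replicate k A) w / fact k)"

datatype xy = X | Y

text \<open>substitution Phi(A,B) of series A, B without constant term into Phi in Q<<x,y>>\<close>
definition subst :: "xy ser \<Rightarrow> 'a ser \<Rightarrow> 'a ser \<Rightarrow> 'a ser" where
  "subst Phi A B w = (\<Sum>u\<in>{u::xy list. length u \<le> length w}.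
      Phi u * ser_prod (map (\<lambda>c. case c of X \<Rightarrow> A | Y \<Rightarrow> B) u) w)"

definition qspan :: "('b \<Rightarrow> rat) set \<Rightarrow> ('b \<Rightarrow> rat) set" where
  "qspan R = {v. \<exists>S c. finite S \<and> S \<subseteq> R \<and> v = (\<lambda>g. \<Sum>r\<in>S. c r * r g)}"

section \<open>Rational associators\<close>

text \<open>group-like: coefficients form a shuffle character (Delta Phi = Phi (x) Phi, eps Phi = 1)\<close>
fun shuf :: "'a list \<Rightarrow> 'a list \<Rightarrow> 'a list list" where
  "shuf [] v = [v]"
| "shuf u [] = [u]"
| "shuf (a # u) (b # v) = map ((#) a) (shuf u (b # v)) @ map ((#) b) (shuf (a # u) v)"

definition group_like :: "xy ser \<Rightarrow> bool" where
  "group_like Phi \<longleftrightarrow> Phi [] = 1 \<and>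
     (\<forall>u v. Phi u * Phi v = sum_list (map Phi (shuf u v)))"

definition hom_part :: "nat \<Rightarrow> 'a ser \<Rightarrow> 'a ser" where
  "hom_part n F w = (if length w = n then F w else 0)"

text \<open>E lies in the closed two-sided ideal of the completed free algebra on Gens
  generated by the homogeneous elements Rels\<close>
definition in_closed_ideal :: "'a set \<Rightarrow> 'a ser set \<Rightarrow> 'a ser \<Rightarrow> bool" where
  "in_closed_ideal Gens Rels E \<longleftrightarrow> (\<forall>n. hom_part n E \<in>
     qspan {ser_mult (ser_mult (ser_word u) r) (ser_word v) | u r v.
              set u \<subseteq> Gens \<and> set v \<subseteq> Gens \<and> r \<in> Rels \<and> length u + length v + 2 = n})"

text \<open>infinitesimal braids on 4 strands: generators t_ij = t_ji, 1 <= i < j <= 4\<close>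
definition tt :: "nat \<Rightarrow> nat \<Rightarrow> (nat \<times> nat) ser" where
  "tt i j = ser_letter (min i j, max i j)"

definition gens4 :: "(nat \<times> nat) set" where
  "gens4 = {(i, j). 1 \<le> i \<and> i < j \<and> j \<le> 4}"

definition comm :: "'a ser \<Rightarrow> 'a ser \<Rightarrow> 'a ser" where
  "comm A B = ser_diff (ser_mult A B) (ser_mult B A)"

definition rels4 :: "(nat \<times> nat) ser set" where
  "rels4 = {comm (tt i j) (tt k l) | i j k l.
              {i, j, k, l} \<subseteq> {1..4} \<and> card {i, j, k, l} = 4}
         \<union> {comm (tt i j) (ser_add (tt i k) (tt j k)) | i j k.
              {i, j, k} \<subseteq> {1..4} \<and> card {i, j, k} = 3}"

definition eq_A4 :: "(nat \<times> nat) ser \<Rightarrow> (nat \<times> nat) ser \<Rightarrow> bool" where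
  "eq_A4 F G \<longleftrightarrow> in_closed_ideal gens4 rels4 (ser_diff F G)"

definition is_associator1 :: "xy ser \<Rightarrow> bool" where
  "is_associator1 Phi \<longleftrightarrow>
     group_like Phi \<and>
     Phi = ser_inv (subst Phi (ser_letter Y) (ser_letter X)) \<and>
     (let x = ser_letter X; y = ser_letter Y;
          z = ser_scale (-1) (ser_add (ser_letter X) (ser_letter Y)) in
       ser_prod [ser_exp (ser_scale (1/2) x), subst Phi z x,
                 ser_exp (ser_scale (1/2) z), subst Phi y z,
                 ser_exp (ser_scale (1/2) y), subst Phi x y] = ser_one) \<and>
     eq_A4
       (ser_prod [subst Phi (tt 1 2) (ser_add (tt 2 3) (tt 2 4)),
                  subst Phi (ser_add (tt 1 3) (tt 2 3)) (tt 3 4)])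
       (ser_prod [subst Phi (tt 2 3) (tt 3 4),
                  subst Phi (ser_add (tt 1 2) (tt 1 3)) (ser_add (tt 2 4) (tt 3 4)),
                  subst Phi (tt 1 2) (tt 2 3)])"

section \<open>Naturality\<close>

definition bexp :: "nat \<Rightarrow> nat \<Rightarrow> int" where
  "bexp p n = \<lfloor>(of_nat p * of_nat n / (of_nat p - 1)^2 - 1 / (of_nat p - 1)) :: rat\<rfloor>"

definition Dn :: "nat \<Rightarrow> nat" where
  "Dn n = (\<Prod>p\<in>{p. prime p \<and> p \<le> n + 1}. p ^ nat (bexp p n))"

definition in_Zp :: "nat \<Rightarrow> rat \<Rightarrow> bool" where
  "in_Zp p q \<longleftrightarrow> (\<exists>a b::int. b \<noteq> 0 \<and> \<not> int p dvd b \<and> q = of_int a / of_int b)"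

definition natural :: "xy ser \<Rightarrow> bool" where
  "natural Phi \<longleftrightarrow> Phi [] = 1 \<and>
     (\<forall>p w. prime p \<and> w \<noteq> [] \<longrightarrow> in_Zp p (Phi w * of_nat p ^ nat (bexp p (length w))))"

section \<open>Chord diagrams\<close>

text \<open>A (linear) Gauss word: every label occurs exactly twice. Its matching on
  the points 0..<2n (in the order of the oriented circle).\<close>
definition gauss_ok :: "'b list \<Rightarrow> bool" where
  "gauss_ok w \<longleftrightarrow> (\<forall>x\<in>set w. count_list w x = 2)"

definition gm :: "'b list \<Rightarrow> nat \<Rightarrow> nat" where
  "gm w i = (if i < length w then (THE j. j < length w \<and> j \<noteq> i \<and> w ! j = w ! i) else i)"

definition delta :: "'c \<Rightarrow> 'c \<Rightarrow> rat" where
  "delta f g = (if g = f then 1 else 0)"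

definition chord_basis :: "nat \<Rightarrow> (nat \<Rightarrow> nat) set" where
  "chord_basis n = {gm w | w :: nat list. gauss_ok w \<and> length w = 2 * n}"

definition ins_at :: "nat \<Rightarrow> 'b \<Rightarrow> 'b list \<Rightarrow> 'b list" where
  "ins_at k x w = take k w @ x # drop k w"

text \<open>Relations: rotation (diagrams live on a circle), one-term, four-term.\<close>
definition rot_rels :: "((nat \<Rightarrow> nat) \<Rightarrow> rat) set" where
  "rot_rels = {(\<lambda>g. delta (gm w) g - delta (gm (rotate1 w)) g) | w :: nat list. gauss_ok w}"

definition oneT_rels :: "((nat \<Rightarrow> nat) \<Rightarrow> rat) set" where
  "oneT_rels = {delta (gm w) | w :: nat list. gauss_ok w \<and> w \<noteq> [] \<and>
      ((\<exists>i. i + 1 < length w \<and> w ! i = w ! (i + 1)) \<or> hd w = last w)}"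

text \<open>w contains the fixed chord a twice and the free point N once; the new chord joins N
  to a point just before / just after each endpoint of a:
  G(p,+) - G(p,-) + G(q,+) - G(q,-) = 0.\<close>
definition fourT_rels :: "((nat \<Rightarrow> nat) \<Rightarrow> rat) set" where
  "fourT_rels = {(\<lambda>g. \<Sum>j<2. delta (gm (ins_at (filter (\<lambda>i. w ! i = a) [0..<length w] ! j + 1) N w)) g
                         - delta (gm (ins_at (filter (\<lambda>i. w ! i = a) [0..<length w] ! j) N w)) g)
      | w a N :: nat. a \<noteq> N \<and> count_list w N = 1 \<and> count_list w a = 2 \<and>
                      (\<forall>x\<in>set w. x \<noteq> N \<longrightarrow> count_list w x = 2)}"

definition chord_rels :: "((nat \<Rightarrow> nat) \<Rightarrow> rat) set" where
  "chord_rels = rot_rels \<union> oneT_rels \<union> fourT_rels"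

text \<open>An element of Chord(Q), given by its degree-n representatives V n in the free
  Q-space on chord diagrams, lies in Chord_nat = sum_n D(n)^-1 Chord_n(Z).\<close>
definition in_chord_nat :: "(nat \<Rightarrow> (nat \<Rightarrow> nat) \<Rightarrow> rat) \<Rightarrow> bool" where
  "in_chord_nat V \<longleftrightarrow> (\<forall>n. \<exists>z :: (nat \<Rightarrow> nat) \<Rightarrow> int.
      finite {f. z f \<noteq> 0} \<and> {f. z f \<noteq> 0} \<subseteq> chord_basis n \<and>
      (\<lambda>f. V n f - of_int (z f) / of_nat (Dn n)) \<in> qspan chord_rels)"

section \<open>Knot diagrams decomposed into elementary pieces\<close>

text \<open>Pieces act on the strand positions 0,1,... of a horizontal level, read top to bottom:
  a maximum creating strands i,i+1; a minimum joining strands i,i+1; a positive (True) or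
  negative (False) crossing of strands i,i+1; a re-bracketing c (True) or c^-1 (False)
  on strands i,i+1,i+2.\<close>
datatype piece = PMax nat | PMin nat | PCross bool nat | PAssoc bool nat

fun wch :: "piece \<Rightarrow> nat \<Rightarrow> nat" where
  "wch (PMax i) n = n + 2"
| "wch (PMin i) n = n - 2"
| "wch (PCross s i) n = n"
| "wch (PAssoc s i) n = n"

fun piece_ok :: "piece \<Rightarrow> nat \<Rightarrow> bool" where
  "piece_ok (PMax i) n = (i \<le> n)"
| "piece_ok (PMin i) n = (i + 2 \<le> n)"
| "piece_ok (PCross s i) n = (i + 2 \<le> n)"
| "piece_ok (PAssoc s i) n = (i + 3 \<le> n)"

text \<open>number of strands at level k (level k lies just above piece k)\<close>
definition width :: "piece list \<Rightarrow> nat \<Rightarrow> nat" where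
  "width K k = fold wch (take k K) 0"

definition swp :: "nat \<Rightarrow> nat \<Rightarrow> nat" where
  "swp i p = (if p = i then i + 1 else if p = i + 1 then i else p)"

text \<open>Traversal states (k, p, d): at position p of level k, moving down (d = True,
  through piece k) or up (d = False, through piece k-1).\<close>
fun nxt :: "piece list \<Rightarrow> nat \<times> nat \<times> bool \<Rightarrow> nat \<times> nat \<times> bool" where
  "nxt K (k, p, True) = (case K ! k of
      PMax i \<Rightarrow> (Suc k, if p < i then p else p + 2, True)
    | PMin i \<Rightarrow> (if p < i then (Suc k, p, True) else if i + 2 \<le> p then (Suc k, p - 2, True)
                else if p = i then (k, i + 1, False) else (k, i, False))
    | PCross s i \<Rightarrow> (Suc k, swp i p, True)
    | PAssoc s i \<Rightarrow> (Suc k, p, True))"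
| "nxt K (k, q, False) = (case K ! (k - 1) of
      PMax i \<Rightarrow> (if q < i then (k - 1, q, False) else if i + 2 \<le> q then (k - 1, q - 2, False)
                else if q = i then (k, i + 1, True) else (k, i, True))
    | PMin i \<Rightarrow> (k - 1, if q < i then q else q + 2, False)
    | PCross s i \<Rightarrow> (k - 1, swp i q, False)
    | PAssoc s i \<Rightarrow> (k - 1, q, False))"

definition on_strand :: "nat \<Rightarrow> nat \<times> nat \<Rightarrow> bool" where
  "on_strand p c \<longleftrightarrow> p = fst c \<or> p = snd c"

text \<open>Chord endpoints met while traversing a piece: chord m of piece k is labelled (k,m);
  the flag records that the strand is traversed upwards (reversed orientation).
  The chords of a piece are listed top to bottom; crossing chords sit just above the crossing.\<close>
fun ends :: "piece list \<Rightarrow> (nat \<times> nat) list list \<Rightarrow> nat \<times> nat \<times> bool \<Rightarrow> ((nat \<times> nat) \<times> bool) list" where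
  "ends K ws (k, p, True) = (case K ! k of
      PCross s i \<Rightarrow> [((k, m), False). m \<leftarrow> [0..<length (ws ! k)], on_strand p (ws ! k ! m)]
    | PAssoc s i \<Rightarrow> [((k, m), False). m \<leftarrow> [0..<length (ws ! k)], on_strand p (ws ! k ! m)]
    | _ \<Rightarrow> [])"
| "ends K ws (k, q, False) = (case K ! (k - 1) of
      PCross s i \<Rightarrow> rev [((k - 1, m), True). m \<leftarrow> [0..<length (ws ! (k - 1))], on_strand (swp i q) (ws ! (k - 1) ! m)]
    | PAssoc s i \<Rightarrow> rev [((k - 1, m), True). m \<leftarrow> [0..<length (ws ! (k - 1))], on_strand q (ws ! (k - 1) ! m)]
    | _ \<Rightarrow> [])"

text \<open>orientation ori: start going down the left (ori) or right (\<not> ori) leg of the first maximum\<close>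
definition start :: "bool \<Rightarrow> nat \<times> nat \<times> bool" where
  "start ori = (1, if ori then 0 else 1, True)"

definition npts :: "piece list \<Rightarrow> nat" where
  "npts K = (\<Sum>k\<le>length K. width K k)"

definition path :: "piece list \<Rightarrow> bool \<Rightarrow> nat \<Rightarrow> nat \<times> nat \<times> bool" where
  "path K ori t = (nxt K ^^ t) (start ori)"

text \<open>a decomposed knot diagram: valid pieces, from the empty level to the empty level,
  and the closed curve has a single component\<close>
definition knot_diagram :: "piece list \<Rightarrow> bool" where
  "knot_diagram K \<longleftrightarrow> K \<noteq> [] \<and>
     (\<forall>k<length K. piece_ok (K ! k) (width K k)) \<and> width K (length K) = 0 \<and>
     path K True (npts K) = start True \<and>
     inj_on (\<lambda>t. (fst (path K True t), fst (snd (path K True t)))) {..<npts K}"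

definition gauss :: "piece list \<Rightarrow> bool \<Rightarrow> (nat \<times> nat) list list \<Rightarrow> ((nat \<times> nat) \<times> bool) list" where
  "gauss K ori ws = concat (map (\<lambda>t. ends K ws (path K ori t)) [0..<npts K])"

text \<open>decoration of a piece, as a series in the horizontal chords (i,j), i<j, of its level\<close>
fun dec :: "xy ser \<Rightarrow> piece \<Rightarrow> (nat \<times> nat) ser" where
  "dec Phi (PMax i) = ser_one"
| "dec Phi (PMin i) = ser_one"
| "dec Phi (PCross s i) = ser_exp (ser_scale (if s then 1/2 else -1/2) (ser_letter (i, i + 1)))"
| "dec Phi (PAssoc s i) = (if s then subst Phi (ser_letter (i, i + 1)) (ser_letter (i + 1, i + 2))
                           else ser_inv (subst Phi (ser_letter (i, i + 1)) (ser_letter (i + 1, i + 2))))"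

definition choices :: "piece list \<Rightarrow> nat \<Rightarrow> (nat \<times> nat) list list set" where
  "choices K n = {ws. length ws = length K \<and>
      (\<forall>k<length K. set (ws ! k) \<subseteq> {(a, b). a < b \<and> b < width K k}) \<and>
      sum_list (map length ws) = n}"

text \<open>degree-n part of I_Phi(K), as a combination of chord diagrams\<close>
definition IPhi :: "xy ser \<Rightarrow> piece list \<Rightarrow> bool \<Rightarrow> nat \<Rightarrow> (nat \<Rightarrow> nat) \<Rightarrow> rat" where
  "IPhi Phi K ori n f = (\<Sum>ws\<in>choices K n.
      (\<Prod>k<length K. dec Phi (K ! k) (ws ! k)) *
      (-1) ^ length (filter snd (gauss K ori ws)) *
      delta (gm (map fst (gauss K ori ws))) f)"

end

theory Submission
  imports Defs "HOL-Library.Nat_Bijection"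
begin

text \<open>Expanding the product of the decorations, the degree-\<open>n\<close> part of \<open>I\<^sub>\<Phi>(K)\<close> is a sum,
  over the ways of placing \<open>n\<close> horizontal chords on the crossings and re-bracketings, of
  a product of coefficients of the decorations times a signed chord diagram, read off from
  the Gauss word of the traversal of the knot. Naturality of \<open>\<Phi>\<close> and the bound
  \<open>v\<^sub>p(k!) \<le> (k - 1)/(p - 1)\<close> put every degree-\<open>k\<close> coefficient of a decoration into
  \<open>p\<^sup>-\<^sup>b\<^sup>\<^sub>p\<^sup>(\<^sup>k\<^sup>) \<int>\<^sub>(\<^sub>p\<^sub>)\<close>; as \<open>b\<^sub>p\<close> is superadditive, the products of total degree \<open>n\<close> lie in
  \<open>p\<^sup>-\<^sup>b\<^sup>\<^sub>p\<^sup>(\<^sup>n\<^sup>) \<int>\<^sub>(\<^sub>p\<^sub>)\<close> for every \<open>p\<close>, i.e.\ in \<open>D(n)\<^sup>-\<^sup>1 \<int>\<close>. It remains to see that each Gauss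
  word that occurs is a chord diagram with \<open>n\<close> chords: the traversal passes every point of
  every level exactly once, so each chord endpoint is met exactly once.\<close>

section \<open>\<open>p\<close>-integral rationals and the exponents \<open>b\<^sub>p(n)\<close>\<close>

lemma in_Zp_of_int: "prime p \<Longrightarrow> in_Zp p (of_int z)"
  unfolding in_Zp_def by (intro exI[of _ z] exI[of _ 1]) (auto simp: prime_gt_1_nat)

lemma in_Zp_inverse_of_int: "prime p \<Longrightarrow> \<not> int p dvd b \<Longrightarrow> in_Zp p (1 / of_int b)"
  unfolding in_Zp_def by (intro exI[of _ 1] exI[of _ b]) auto

lemma in_Zp_add_mult:
  assumes "prime p" "in_Zp p x" "in_Zp p y"
  shows "in_Zp p (x + y)" and "in_Zp p (x * y)"
proof -
  obtain a b where ab: "b \<noteq> 0" "\<not> int p dvd b" "x = of_int a / of_int b"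
    using assms(2) unfolding in_Zp_def by blast
  obtain c d where cd: "d \<noteq> 0" "\<not> int p dvd d" "y = of_int c / of_int d"
    using assms(3) unfolding in_Zp_def by blast
  have "prime (int p)" using assms(1) by simp
  then have bd: "\<not> int p dvd b * d" using ab cd by (simp add: prime_dvd_mult_iff)
  have "x + y = of_int (a * d + c * b) / of_int (b * d)" "x * y = of_int (a * c) / of_int (b * d)"
    using ab cd by (simp_all add: field_simps)
  then show "in_Zp p (x + y)" "in_Zp p (x * y)"
    unfolding in_Zp_def using ab cd bd by (metis mult_eq_0_iff)+
qed

lemmas in_Zp_add = in_Zp_add_mult(1) and in_Zp_mult = in_Zp_add_mult(2)

lemma in_Zp_mult_of_int: "prime p \<Longrightarrow> in_Zp p x \<Longrightarrow> in_Zp p (x * of_int z)"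
  by (rule in_Zp_mult[OF _ _ in_Zp_of_int])

text \<open>A prime factor of the reduced denominator would have to divide the numerator.\<close>
lemma Ints_if_in_Zp_all_primes:
  assumes "\<And>p. prime p \<Longrightarrow> in_Zp p q"
  shows "q \<in> \<int>"
proof -
  obtain a b where q: "quotient_of q = (a, b)" by (cases "quotient_of q")
  have b0: "b > 0" and cop: "coprime a b" and qe: "q = of_int a / of_int b"
    using quotient_of_denom_pos[OF q] quotient_of_coprime[OF q] quotient_of_div[OF q] by auto
  show ?thesis
  proof (rule ccontr)
    assume "q \<notin> \<int>"
    then have "nat b \<noteq> 1" using qe b0 by (auto simp: nat_eq_iff)
    then obtain p where p: "prime p" "p dvd nat b" using prime_factor_nat by blast
    then have "int p dvd int (nat b)" by (simp only: int_dvd_int_iff)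
    then have pb: "int p dvd b" using b0 by simp
    obtain c d where cd: "d \<noteq> 0" "\<not> int p dvd d" "q = of_int c / of_int d"
      using assms[OF p(1)] unfolding in_Zp_def by blast
    have "a * d = c * b"
      using qe cd b0 by (simp add: field_simps) (metis of_int_eq_iff of_int_mult)
    then have "int p dvd a * d" using pb by (metis dvd_mult)
    then have "int p dvd a" using cd(2) p(1) by (simp add: prime_dvd_mult_iff)
    then have "is_unit (int p)" using pb cop by (meson coprime_common_divisor)
    then show False using p(1) by simp
  qed
qed

lemma bexp_linear:
  assumes "prime p"
  shows "bexp p n = \<lfloor>of_nat p / (of_nat p - 1)^2 * of_nat n - 1 / (of_nat p - 1) :: rat\<rfloor>"
  unfolding bexp_def by simp

lemma bexp_mono: assumes "prime p" "m \<le> n" shows "bexp p m \<le> bexp p n"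
  unfolding bexp_linear[OF assms(1)] using assms prime_gt_1_nat[OF assms(1)]
  by (intro floor_mono diff_right_mono mult_left_mono) auto

lemma bexp_superadd: assumes "prime p" shows "bexp p m + bexp p n \<le> bexp p (m + n)"
proof -
  define c where "c = 1 / (of_nat p - 1 :: rat)"
  define d where "d = of_nat p / (of_nat p - 1 :: rat)^2"
  have "c \<ge> 0" using prime_gt_1_nat[OF assms] unfolding c_def by simp
  then have "(d * of_nat m - c) + (d * of_nat n - c) \<le> d * of_nat (m + n) - c"
    by (simp add: algebra_simps)
  then have "\<lfloor>d * of_nat m - c\<rfloor> + \<lfloor>d * of_nat n - c\<rfloor> \<le> \<lfloor>d * of_nat (m + n) - c\<rfloor>"
    by (meson floor_mono le_floor_add order_trans)
  then show ?thesis unfolding bexp_linear[OF assms] c_def d_def .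
qed

lemma bexp_ge_div:
  assumes "prime p" "k \<ge> 1"
  shows "int ((k - 1) div (p - 1)) \<le> bexp p k"
proof -
  have pq: "(of_nat p :: rat) - 1 > 0" using prime_gt_1_nat[OF assms(1)] by simp
  have "(p - 1) * ((k - 1) div (p - 1)) \<le> k - 1" by simp
  then have "(of_nat (p - 1) :: rat) * of_nat ((k - 1) div (p - 1)) \<le> of_nat (k - 1)"
    by (metis of_nat_le_iff of_nat_mult)
  then have "(of_nat p - 1) * of_nat ((k - 1) div (p - 1)) \<le> (of_nat k - 1 :: rat)"
    using prime_gt_1_nat[OF assms(1)] assms(2) by (simp add: of_nat_diff)
  then have "of_nat ((k - 1) div (p - 1)) \<le> (of_nat k - 1) / (of_nat p - 1 :: rat)"
    using pq by (simp add: field_simps)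
  also have "\<dots> = (of_nat k - 1) * (of_nat p - 1) / (of_nat p - 1)^2"
    using pq by (simp add: power2_eq_square)
  also have "\<dots> \<le> (of_nat p * of_nat k - (of_nat p - 1)) / (of_nat p - 1)^2"
    by (rule divide_right_mono) (simp_all add: algebra_simps)
  also have "\<dots> = of_nat p * of_nat k / (of_nat p - 1)^2 - (of_nat p - 1) / (of_nat p - 1)^2"
    by (rule diff_divide_distrib)
  also have "(of_nat p - 1) / (of_nat p - 1)^2 = 1 / (of_nat p - 1 :: rat)"
    using pq by (simp add: power2_eq_square)
  finally show ?thesis unfolding bexp_def by (simp only: le_floor_iff of_int_of_nat_eq)
qed

lemma bexp_le_0_if_large: assumes "prime p" "n + 1 < p" shows "bexp p n \<le> 0"
proof -
  have pq: "(of_nat p :: rat) - 1 > 0" using assms by simp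
  have "of_nat p * (of_nat n + 1) < (of_nat p * of_nat p :: rat)"
    using assms by (intro mult_strict_left_mono) (auto simp: prime_gt_0_nat)
  then have "of_nat p * of_nat n - (of_nat p - 1) < (of_nat p - 1 :: rat)^2"
    by (simp add: power2_eq_square algebra_simps)
  then have "(of_nat p * of_nat n - (of_nat p - 1)) / (of_nat p - 1)^2 < (1 :: rat)"
    using pq by simp
  moreover have "(of_nat p - 1) / (of_nat p - 1)^2 = 1 / (of_nat p - 1 :: rat)"
    using pq by (simp add: power2_eq_square)
  ultimately have "of_nat p * of_nat n / (of_nat p - 1)^2 - 1 / (of_nat p - 1) < (1 :: rat)"
    by (simp add: diff_divide_distrib)
  then show ?thesis unfolding bexp_def by linarith
qed

text \<open>Only primes \<open>p \<le> n + 1\<close> enter \<open>D(n)\<close>; the others have \<open>b\<^sub>p(n) \<le> 0\<close>.\<close>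
lemma prime_power_bexp_dvd_Dn: assumes "prime p" shows "p ^ nat (bexp p n) dvd Dn n"
proof (cases "p \<le> n + 1")
  case True
  have "finite {p. prime p \<and> p \<le> n + 1}" by simp
  then show ?thesis unfolding Dn_def using True assms by (intro dvd_prodI) auto
next
  case False then show ?thesis using bexp_le_0_if_large[OF assms] by simp
qed

lemma Dn_pos: "Dn n > 0"
  unfolding Dn_def by (rule prod_pos) (auto simp: prime_gt_0_nat)

text \<open>\<open>q \<in> p\<^sup>-\<^sup>b\<^sup>\<^sub>p\<^sup>(\<^sup>n\<^sup>) \<int>\<^sub>(\<^sub>p\<^sub>)\<close>, the bound on degree-\<open>n\<close> coefficients; the truncation by \<open>nat\<close>
  only affects \<open>b\<^sub>p(0) = -1\<close>.\<close>
definition nat_coeff :: "nat \<Rightarrow> nat \<Rightarrow> rat \<Rightarrow> bool" where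
  "nat_coeff p n q \<longleftrightarrow> in_Zp p (q * of_nat p ^ nat (bexp p n))"

lemma nat_bexp_superadd: "prime p \<Longrightarrow> nat (bexp p m) + nat (bexp p n) \<le> nat (bexp p (m + n))"
  using bexp_superadd[of p m n] bexp_mono[of p m "m + n"] bexp_mono[of p n "m + n"] by linarith

lemma in_Zp_mult_prime_power_mono:
  assumes "prime p" "in_Zp p (q * of_nat p ^ a)" "a \<le> b"
  shows "in_Zp p (q * of_nat p ^ b)"
proof -
  have "of_nat p ^ b = (of_nat p ^ a * of_nat p ^ (b - a) :: rat)"
    using assms(3) by (simp add: power_add[symmetric])
  then have eq: "q * of_nat p ^ b = (q * of_nat p ^ a) * of_int (int p ^ (b - a))" by simp
  show ?thesis unfolding eq by (rule in_Zp_mult_of_int[OF assms(1,2)])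
qed

lemma nat_coeff_mult:
  assumes "prime p" "nat_coeff p m x" "nat_coeff p n y"
  shows "nat_coeff p (m + n) (x * y)"
proof -
  have "in_Zp p ((x * of_nat p ^ nat (bexp p m)) * (y * of_nat p ^ nat (bexp p n)))"
    using in_Zp_mult assms unfolding nat_coeff_def by blast
  then have "in_Zp p ((x * y) * of_nat p ^ (nat (bexp p m) + nat (bexp p n)))"
    by (simp add: power_add algebra_simps)
  then show ?thesis
    unfolding nat_coeff_def by (rule in_Zp_mult_prime_power_mono[OF assms(1) _ nat_bexp_superadd[OF assms(1)]])
qed

lemma nat_coeff_of_int: "prime p \<Longrightarrow> nat_coeff p n (of_int z)"
  unfolding nat_coeff_def using in_Zp_of_int[of p "z * int p ^ nat (bexp p n)"] by simp

lemma nat_coeff_0: "prime p \<Longrightarrow> nat_coeff p n 0"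
  using nat_coeff_of_int[of p n 0] by simp

lemma nat_coeff_1: "prime p \<Longrightarrow> nat_coeff p 0 1"
  using nat_coeff_of_int[of p 0 1] by simp

lemma nat_coeff_mult_of_int: "prime p \<Longrightarrow> nat_coeff p n x \<Longrightarrow> nat_coeff p n (of_int z * x)"
  using nat_coeff_mult[OF _ nat_coeff_of_int[of p 0 z]] by simp

lemma nat_coeff_sum:
  assumes "prime p" "\<And>i. i \<in> A \<Longrightarrow> nat_coeff p n (f i)"
  shows "nat_coeff p n (\<Sum>i\<in>A. f i)"
  using assms(2)
proof (induction A rule: infinite_finite_induct)
  case (insert x F)
  then show ?case using in_Zp_add[OF assms(1)] by (simp add: nat_coeff_def distrib_right)
qed (simp_all add: nat_coeff_0 assms(1))

lemma nat_coeff_prod: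
  assumes "prime p" "finite A" "\<And>i. i \<in> A \<Longrightarrow> nat_coeff p (d i) (f i)"
  shows "nat_coeff p (\<Sum>i\<in>A. d i) (\<Prod>i\<in>A. f i)"
  using assms(2,3)
  by (induction A rule: finite_induct) (simp_all add: nat_coeff_mult nat_coeff_1 assms(1))

lemma fact_eq_prime_power_fact_div_mult:
  assumes "prime p"
  shows "\<exists>u. fact n = p ^ (n div p) * fact (n div p) * u \<and> \<not> p dvd u"
proof (induction n)
  case 0 then show ?case using assms by (intro exI[of _ 1]) (auto simp: prime_gt_1_nat)
next
  case (Suc n)
  then obtain u where u: "fact n = p ^ (n div p) * fact (n div p) * u" "\<not> p dvd u" by blast
  have p1: "p > 1" using assms prime_gt_1_nat by blast
  show ?case
  proof (cases "p dvd Suc n")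
    case True
    then obtain k where k: "Suc n = p * Suc k"
      by (metis dvd_def mult_0_right nat.distinct(1) not0_implies_Suc)
    then have dk: "Suc n div p = Suc k" "n div p = k"
      using p1 by (simp_all add: div_nat_eqI algebra_simps)
    have "fact (Suc n) = Suc n * fact n" by simp
    also have "\<dots> = (p * p ^ k) * (Suc k * fact k) * u" using k u(1) dk by (simp add: algebra_simps)
    finally show ?thesis using u(2) dk by auto
  next
    case False
    then have "Suc n div p = n div p" by (simp add: div_Suc dvd_eq_mod_eq_0)
    then have "fact (Suc n) = p ^ (Suc n div p) * fact (Suc n div p) * (Suc n * u)"
      using u(1) by (simp add: algebra_simps)
    moreover have "\<not> p dvd Suc n * u" using False u(2) prime_dvd_mult_iff[OF assms] by blast
    ultimately show ?thesis by blast
  qed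
qed

text \<open>Equivalently \<open>v\<^sub>p(n!) \<le> (n - 1)/(p - 1)\<close>, the classical bound from Legendre's formula.\<close>
lemma in_Zp_prime_power_div_fact:
  assumes "prime p"
  shows "in_Zp p (of_nat p ^ ((n - 1) div (p - 1)) / fact n)"
proof (induction n rule: less_induct)
  case (less n)
  have p1: "p > 1" using assms prime_gt_1_nat by blast
  obtain u where u: "fact n = p ^ (n div p) * fact (n div p) * u" "\<not> p dvd u"
    using fact_eq_prime_power_fact_div_mult[OF assms] by blast
  have iu: "in_Zp p (1 / of_int (int u))"
    using in_Zp_inverse_of_int[OF assms, of "int u"] u(2) by (simp add: int_dvd_int_iff)
  define m where "m = n div p"
  define e where "e = (n - 1) div (p - 1)"
  have fe: "fact n = (of_nat p ^ m * fact m * of_nat u :: rat)"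
    using u(1) unfolding m_def by (metis of_nat_fact of_nat_mult of_nat_power)
  show ?case
  proof (cases "m = 0")
    case True
    then have "of_nat p ^ e / fact n = (1 / of_int (int u)) * (of_int (int p ^ e) :: rat)"
      using fe by (simp add: divide_inverse mult.commute)
    then show ?thesis unfolding e_def[symmetric] using in_Zp_mult_of_int[OF assms iu] by metis
  next
    case False
    then have "n > 0" unfolding m_def by (metis div_0 gr0I)
    then have mn: "m < n" using p1 unfolding m_def by (simp add: div_less_dividend)
    have IH: "in_Zp p (of_nat p ^ ((m - 1) div (p - 1)) / fact m)" using less mn by blast
    have "(p - 1) * m + (m - 1) = p * m - 1" using False p1 by (simp add: diff_mult_distrib)
    moreover have "p * m \<le> n" unfolding m_def by simp
    ultimately have "(p - 1) * m + (m - 1) \<le> n - 1" by linarith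
    then have "((p - 1) * m + (m - 1)) div (p - 1) \<le> e" unfolding e_def by (rule div_le_mono)
    then have ee: "m + (m - 1) div (p - 1) \<le> e" using p1 by simp
    define r where "r = e - m - (m - 1) div (p - 1)"
    have "(of_nat p ^ e :: rat) = of_nat p ^ m * of_nat p ^ ((m - 1) div (p - 1)) * of_nat p ^ r"
      using ee unfolding r_def by (simp add: power_add[symmetric])
    then have "(of_nat p ^ e / fact n :: rat) =
        (of_nat p ^ ((m - 1) div (p - 1)) / fact m) * (1 / of_int (int u)) * of_int (int p ^ r)"
      unfolding fe using p1 u(2) by (simp add: field_simps)
    then show ?thesis unfolding e_def[symmetric]
      using in_Zp_mult_of_int[OF assms in_Zp_mult[OF assms IH iu]] by metis
  qed
qed

text \<open>The coefficients \<open>1/(2\<^sup>k k!)\<close> of \<open>exp(\<plusminus>t/2)\<close> are admissible; this is where the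
  definition of \<open>b\<^sub>p\<close> comes from (\<open>b\<^sub>2(k) = 2k - 1\<close> absorbs the extra powers of \<open>2\<close>).\<close>
lemma nat_coeff_inverse_two_power_fact:
  assumes "prime p"
  shows "nat_coeff p k (1 / (2 ^ k * fact k))"
proof (cases "k = 0")
  case True then show ?thesis using nat_coeff_1[OF assms] by simp
next
  case False
  then have k1: "k \<ge> 1" by simp
  show ?thesis
  proof (cases "p = 2")
    case True
    have "(of_nat 2 * of_nat k / (of_nat 2 - 1)^2 - 1 / (of_nat 2 - 1) :: rat) = of_int (2 * int k - 1)"
      by simp
    then have "bexp 2 k = 2 * int k - 1" unfolding bexp_def by (simp only: floor_of_int)
    then have B: "nat (bexp 2 k) = (k - 1) + k" using k1 by simp
    have "(1 / (2 ^ k * fact k)) * (of_nat 2 :: rat) ^ nat (bexp 2 k) = of_nat 2 ^ ((k - 1) div (2 - 1)) / fact k"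
      unfolding B by (simp add: power_add)
    then show ?thesis unfolding nat_coeff_def True using in_Zp_prime_power_div_fact[OF assms[unfolded True], of k] by simp
  next
    case False
    define e where "e = (k - 1) div (p - 1)"
    have eB: "e \<le> nat (bexp p k)" using bexp_ge_div[OF assms k1] unfolding e_def by simp
    then have "nat (bexp p k) = e + (nat (bexp p k) - e)" by simp
    then have pw: "(of_nat p :: rat) ^ nat (bexp p k) = of_nat p ^ e * of_nat p ^ (nat (bexp p k) - e)"
      by (metis power_add)
    have eq: "(1 / (2 ^ k * fact k)) * (of_nat p :: rat) ^ nat (bexp p k) =
        (of_nat p ^ e / fact k) * (1 / of_int (2 ^ k)) * of_int (int p ^ (nat (bexp p k) - e))"
      unfolding pw by simp
    have nd: "\<not> int p dvd 2 ^ k"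
    proof
      assume "int p dvd 2 ^ k"
      then have "int p dvd 2" using assms prime_dvd_power[of "int p"] by simp
      then have "p dvd 2" by presburger
      then show False using False assms two_is_prime_nat primes_dvd_imp_eq by blast
    qed
    show ?thesis unfolding nat_coeff_def eq
      by (rule in_Zp_mult_of_int[OF assms in_Zp_mult[OF assms _ in_Zp_inverse_of_int[OF assms nd]]])
         (use in_Zp_prime_power_div_fact[OF assms, of k] e_def in simp)
  qed
qed

section \<open>Series with admissible coefficients\<close>

definition natural_ser :: "nat \<Rightarrow> 'a ser \<Rightarrow> bool" where
  "natural_ser p F \<longleftrightarrow> (\<forall>w. nat_coeff p (length w) (F w))"

lemma natural_ser_one: "prime p \<Longrightarrow> natural_ser p ser_one"
  unfolding natural_ser_def ser_one_def using nat_coeff_0 nat_coeff_1 by auto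

lemma ser_mult_scaled_letter:
  "ser_mult (ser_scale c (ser_letter a)) G w = (if w \<noteq> [] \<and> hd w = a then c * G (tl w) else 0)"
proof -
  have "ser_mult (ser_scale c (ser_letter a)) G w =
      (\<Sum>j\<le>length w. if j = 1 then (if w \<noteq> [] \<and> hd w = a then c * G (tl w) else 0) else 0)"
    unfolding ser_mult_def
  proof (rule sum.cong[OF refl])
    fix j assume "j \<in> {..length w}"
    then have "take j w = [a] \<longleftrightarrow> j = 1 \<and> w \<noteq> [] \<and> hd w = a"
      by (cases w; cases j) auto
    then show "ser_scale c (ser_letter a) (take j w) * G (drop j w) =
        (if j = 1 then (if w \<noteq> [] \<and> hd w = a then c * G (tl w) else 0) else 0)"
      by (auto simp: ser_scale_def ser_letter_def drop_Suc)
  qed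
  also have "\<dots> = (if 1 \<in> {..length w} then (if w \<noteq> [] \<and> hd w = a then c * G (tl w) else 0) else 0)"
    by (rule sum.delta[OF finite_atMost])
  also have "\<dots> = (if w \<noteq> [] \<and> hd w = a then c * G (tl w) else 0)"
    by (cases w) auto
  finally show ?thesis .
qed

lemma ser_prod_replicate_scaled_letter:
  "ser_prod (replicate k (ser_scale c (ser_letter a))) w = (if w = replicate k a then c ^ k else 0)"
proof (induction k arbitrary: w)
  case 0 then show ?case by (simp add: ser_prod_def ser_one_def)
next
  case (Suc k)
  have "ser_prod (replicate (Suc k) (ser_scale c (ser_letter a))) w =
      ser_mult (ser_scale c (ser_letter a)) (ser_prod (replicate k (ser_scale c (ser_letter a)))) w"
    by (simp add: ser_prod_def)
  then show ?case unfolding ser_mult_scaled_letter Suc by (cases w) auto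
qed

lemma ser_prod_map_letter: "ser_prod (map ser_letter xs) w = (if w = xs then 1 else 0)"
proof (induction xs arbitrary: w)
  case Nil then show ?case by (simp add: ser_prod_def ser_one_def)
next
  case (Cons a xs)
  have "ser_letter a = ser_scale 1 (ser_letter a)" by (rule ext) (simp add: ser_scale_def)
  then have "ser_prod (map ser_letter (a # xs)) w =
      ser_mult (ser_scale 1 (ser_letter a)) (ser_prod (map ser_letter xs)) w"
    by (simp add: ser_prod_def)
  then show ?case unfolding ser_mult_scaled_letter Cons by (cases w) auto
qed

lemma ser_exp_scaled_letter:
  "ser_exp (ser_scale c (ser_letter a)) w =
    (if w = replicate (length w) a then c ^ length w / fact (length w) else 0)"
  unfolding ser_exp_def ser_prod_replicate_scaled_letter
  by (subst sum.cong[OF refl, where h = "\<lambda>k. if k = length w then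
      (if w = replicate (length w) a then c ^ length w / fact (length w) else 0) else 0"])
     (auto simp: sum.delta)

lemma natural_ser_exp_half_letter:
  assumes "prime p" "c = 1/2 \<or> c = -1/2"
  shows "natural_ser p (ser_exp (ser_scale c (ser_letter a)))"
  unfolding natural_ser_def
proof
  fix w :: "'a list"
  let ?n = "length w"
  obtain s :: int where s: "c = of_int s / 2" "s = 1 \<or> s = -1" using assms(2) by force
  have eq: "c ^ ?n / fact ?n = of_int (s ^ ?n) * (1 / (2 ^ ?n * fact ?n))"
    unfolding s(1) power_divide by simp
  have "nat_coeff p ?n (c ^ ?n / fact ?n)"
    unfolding eq by (rule nat_coeff_mult_of_int[OF assms(1) nat_coeff_inverse_two_power_fact[OF assms(1)]])
  then show "nat_coeff p ?n (ser_exp (ser_scale c (ser_letter a)) w)"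
    unfolding ser_exp_scaled_letter using nat_coeff_0[OF assms(1)] by simp
qed

lemma subst_letters:
  "subst Phi (ser_letter a) (ser_letter b) w =
    (\<Sum>u\<in>{u::xy list. length u \<le> length w}. Phi u * (if w = map (case_xy a b) u then 1 else 0))"
proof -
  have "map (case_xy (ser_letter a) (ser_letter b)) u = map ser_letter (map (case_xy a b) u)" for u
    by (induction u) (auto split: xy.splits)
  then show ?thesis unfolding subst_def by (simp only: ser_prod_map_letter)
qed

lemma subst_letters_Nil: "subst Phi (ser_letter a) (ser_letter b) [] = Phi []"
proof -
  have "{u::xy list. length u \<le> 0} = {[]}" by auto
  then show ?thesis unfolding subst_letters by simp
qed

lemma natural_ser_subst_letters:
  assumes "prime p" "natural Phi"
  shows "natural_ser p (subst Phi (ser_letter a) (ser_letter b))"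
  unfolding natural_ser_def subst_letters
proof (intro allI nat_coeff_sum[OF assms(1)])
  fix w :: "'a list" and u :: "xy list"
  have "nat_coeff p (length u) (Phi u)"
    using assms nat_coeff_1[OF assms(1)] unfolding natural_def nat_coeff_def by (cases "u = []") auto
  then show "nat_coeff p (length w) (Phi u * (if w = map (case_xy a b) u then 1 else 0))"
    using nat_coeff_0[OF assms(1)] by auto
qed

text \<open>The recursion on word length that \<open>ser_mult F G = ser_one\<close> forces on \<open>G\<close>; it computes
  the definite description \<open>ser_inv\<close>.\<close>
function ser_rinv :: "'a ser \<Rightarrow> 'a list \<Rightarrow> rat" where
  "ser_rinv F w = (if w = [] then 1 else - (\<Sum>k\<in>{1..length w}. F (take k w) * ser_rinv F (drop k w)))"
  by auto
termination by (relation "measure (\<lambda>(F, w). length w)") auto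

declare ser_rinv.simps[simp del]

lemma ser_mult_split_head:
  "ser_mult F G w = F [] * G w + (\<Sum>k\<in>{1..length w}. F (take k w) * G (drop k w))"
proof -
  have "{..length w} = insert 0 {1..length w}" by auto
  then show ?thesis unfolding ser_mult_def by simp
qed

lemma ser_mult_ser_rinv: assumes "F [] = 1" shows "ser_mult F (ser_rinv F) = ser_one"
proof
  fix w :: "'a list"
  show "ser_mult F (ser_rinv F) w = ser_one w"
    unfolding ser_mult_split_head using assms
    by (subst ser_rinv.simps) (simp add: ser_one_def)
qed

lemma ser_right_inverse_unique:
  assumes "F [] = 1" "ser_mult F G = ser_one" "ser_mult F H = ser_one"
  shows "G = H"
proof
  fix w show "G w = H w"
  proof (induction w rule: length_induct)
    case (1 w)
    have "(\<Sum>k\<in>{1..length w}. F (take k w) * G (drop k w)) = (\<Sum>k\<in>{1..length w}. F (take k w) * H (drop k w))"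
      using 1 by (intro sum.cong) auto
    then show ?case
      using fun_cong[OF assms(2), of w] fun_cong[OF assms(3), of w] assms(1)
      unfolding ser_mult_split_head by simp
  qed
qed

lemma ser_inv_eq_ser_rinv: assumes "F [] = 1" shows "ser_inv F = ser_rinv F"
  unfolding ser_inv_def
  using ser_mult_ser_rinv[of F, OF assms] ser_right_inverse_unique[OF assms _ ser_mult_ser_rinv[of F, OF assms]]
  by (rule the_equality)

lemma natural_ser_ser_rinv: assumes "prime p" "natural_ser p F" shows "natural_ser p (ser_rinv F)"
  unfolding natural_ser_def
proof
  fix w show "nat_coeff p (length w) (ser_rinv F w)"
  proof (induction w rule: length_induct)
    case (1 w)
    have "nat_coeff p (length w) (F (take k w) * ser_rinv F (drop k w))" if "k \<in> {1..length w}" for k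
    proof -
      have "length (drop k w) < length w" using that by auto
      then have "nat_coeff p (length (drop k w)) (ser_rinv F (drop k w))" using 1 by blast
      moreover have "nat_coeff p (length (take k w)) (F (take k w))"
        using assms(2) unfolding natural_ser_def by blast
      moreover have "length (take k w) + length (drop k w) = length w" using that by simp
      ultimately show ?thesis using nat_coeff_mult[OF assms(1)] by metis
    qed
    then have "nat_coeff p (length w) (of_int (-1) * (\<Sum>k\<in>{1..length w}. F (take k w) * ser_rinv F (drop k w)))"
      by (intro nat_coeff_mult_of_int nat_coeff_sum assms(1))
    then show ?case using nat_coeff_1[OF assms(1)] by (simp add: ser_rinv.simps[of F w])
  qed
qed

lemma natural_ser_dec: assumes "prime p" "natural Phi" shows "natural_ser p (dec Phi pc)"
proof (cases pc)
  case (PCross s i)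
  then show ?thesis
    using natural_ser_exp_half_letter[OF assms(1), of "1/2"] natural_ser_exp_half_letter[OF assms(1), of "-1/2"]
    by (cases s) auto
next
  case (PAssoc s i)
  let ?Phi = "subst Phi (ser_letter (i, i + 1)) (ser_letter (i + 1, i + 2))"
  have nat: "natural_ser p ?Phi" using natural_ser_subst_letters[OF assms] .
  moreover have "ser_inv ?Phi = ser_rinv ?Phi"
    using ser_inv_eq_ser_rinv subst_letters_Nil assms(2) unfolding natural_def by metis
  ultimately show ?thesis using PAssoc natural_ser_ser_rinv[OF assms(1) nat] by simp
qed (simp_all add: natural_ser_one assms(1))

section \<open>The traversal of a knot diagram\<close>

definition valid_state :: "piece list \<Rightarrow> nat \<times> nat \<times> bool \<Rightarrow> bool" where
  "valid_state K s \<longleftrightarrow> fst s \<le> length K \<and> fst (snd s) < width K (fst s)"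

definition flip :: "nat \<times> nat \<times> bool \<Rightarrow> nat \<times> nat \<times> bool" where
  "flip s = (fst s, fst (snd s), \<not> snd (snd s))"

lemma flip_simp [simp]: "flip (k, p, d) = (k, p, \<not> d)"
  by (simp add: flip_def)

lemma flip_flip [simp]: "flip (flip s) = s"
  by (simp add: flip_def)

lemma valid_state_flip [simp]: "valid_state K (flip s) = valid_state K s"
  by (simp add: valid_state_def flip_def)

lemma width_Suc: "k < length K \<Longrightarrow> width K (Suc k) = wch (K ! k) (width K k)"
  by (simp add: width_def take_Suc_conv_app_nth)

lemma knot_diagram_piece_ok: "knot_diagram K \<Longrightarrow> k < length K \<Longrightarrow> piece_ok (K ! k) (width K k)"
  unfolding knot_diagram_def by blast

lemma knot_diagram_width_length: "knot_diagram K \<Longrightarrow> width K (length K) = 0"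
  unfolding knot_diagram_def by blast

lemma knot_diagram_first_piece:
  assumes "knot_diagram K"
  shows "0 < length K" and "K ! 0 = PMax 0" and "width K 1 = 2"
proof -
  show K: "0 < length K" using assms unfolding knot_diagram_def by simp
  have "piece_ok (K ! 0) 0" using knot_diagram_piece_ok[OF assms K] by (simp add: width_def)
  then show K0: "K ! 0 = PMax 0" by (cases "K ! 0") auto
  show "width K 1 = 2" using width_Suc[OF K] K0 by (simp add: width_def)
qed

lemma valid_state_down: "knot_diagram K \<Longrightarrow> valid_state K (k, p, True) \<Longrightarrow> k < length K"
  using knot_diagram_width_length unfolding valid_state_def by (cases "k = length K") auto

lemma valid_state_level_pos: "valid_state K (k, p, d) \<Longrightarrow> 0 < k"
  unfolding valid_state_def by (cases k) (auto simp: width_def)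

lemma nxt_valid_state:
  assumes K: "knot_diagram K" and s: "valid_state K s"
  shows "valid_state K (nxt K s)"
proof -
  obtain k p d where s_eq: "s = (k, p, d)" by (cases s) auto
  show ?thesis
  proof (cases d)
    case True
    then have s_down: "s = (k, p, True)" using s_eq by simp
    then have k: "k < length K" using valid_state_down[OF K] s by simp
    show ?thesis
      using knot_diagram_piece_ok[OF K k] width_Suc[OF k] s k unfolding s_down valid_state_def
      by (cases "K ! k") (auto simp: swp_def)
  next
    case False
    then have s_up: "s = (k, p, False)" using s_eq by simp
    obtain j where j: "k = Suc j" using valid_state_level_pos s s_up by (cases k) auto
    then have jl: "j < length K" using s s_up unfolding valid_state_def by simp
    show ?thesis
      using knot_diagram_piece_ok[OF K jl] width_Suc[OF jl] s jl unfolding s_up j valid_state_def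
      by (cases "K ! j") (auto simp: swp_def)
  qed
qed

lemma nxt_flip_nxt: "valid_state K s \<Longrightarrow> nxt K (flip (nxt K s)) = flip s"
proof -
  assume s: "valid_state K s"
  obtain k p d where s_eq: "s = (k, p, d)" by (cases s) auto
  show ?thesis
  proof (cases d)
    case True
    then show ?thesis unfolding s_eq by (cases "K ! k") (auto simp: swp_def)
  next
    case False
    obtain j where "k = Suc j" using valid_state_level_pos s s_eq by (cases k) auto
    then show ?thesis unfolding s_eq using False by (cases "K ! j") (auto simp: swp_def)
  qed
qed

lemma path_0: "path K ori 0 = start ori"
  by (simp add: path_def)

lemma path_Suc: "path K ori (Suc t) = nxt K (path K ori t)"
  by (simp add: path_def)

lemma valid_state_path: assumes "knot_diagram K" shows "valid_state K (path K True t)"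
proof (induction t)
  case 0
  show ?case using knot_diagram_first_piece[OF assms]
    unfolding path_0 start_def valid_state_def by (simp add: Suc_le_eq)
qed (simp add: path_Suc nxt_valid_state[OF assms])

lemma npts_eq_card: "npts K = card (SIGMA l:{..length K}. {..<width K l})"
  unfolding npts_def by simp

lemma npts_pos: assumes "knot_diagram K" shows "0 < npts K"
proof -
  have "width K 1 \<le> npts K"
    unfolding npts_def using knot_diagram_first_piece(1)[OF assms] by (intro member_le_sum) (auto simp: Suc_le_eq)
  then show ?thesis using knot_diagram_first_piece(3)[OF assms] by simp
qed

lemma path_npts: "knot_diagram K \<Longrightarrow> path K True (npts K) = start True"
  unfolding knot_diagram_def by blast

definition visited :: "piece list \<Rightarrow> (nat \<times> nat \<times> bool) set" where
  "visited K = path K True ` {..<npts K}"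

lemma finite_visited: "finite (visited K)"
  unfolding visited_def by simp

lemma valid_state_visited: "knot_diagram K \<Longrightarrow> s \<in> visited K \<Longrightarrow> valid_state K s"
  unfolding visited_def using valid_state_path by auto

lemma inj_on_path: assumes "knot_diagram K" shows "inj_on (path K True) {..<npts K}"
  using assms unfolding knot_diagram_def inj_on_def by (metis prod.collapse)

text \<open>The traversal is injective on points and visits as many states as there are points,
  so every point of every level is passed exactly once, in a unique direction.\<close>
lemma visited_level_point:
  assumes K: "knot_diagram K" and "l \<le> length K" "q < width K l"
  shows "\<exists>d. (l, q, d) \<in> visited K"
proof -
  let ?pt = "\<lambda>t. (fst (path K True t), fst (snd (path K True t)))"
  let ?V = "SIGMA l:{..length K}. {..<width K l}"
  have sub: "?pt ` {..<npts K} \<subseteq> ?V"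
    using valid_state_path[OF K] unfolding valid_state_def by auto
  have "inj_on ?pt {..<npts K}" using K unfolding knot_diagram_def by blast
  then have "card (?pt ` {..<npts K}) = card ?V" by (simp add: card_image npts_eq_card)
  then have "?pt ` {..<npts K} = ?V" using sub by (intro card_subset_eq) auto
  moreover have "(l, q) \<in> ?V" using assms(2,3) by simp
  ultimately have "(l, q) \<in> ?pt ` {..<npts K}" by simp
  then obtain t where "t < npts K" "?pt t = (l, q)" by auto
  then have "path K True t = (l, q, snd (snd (path K True t)))" "path K True t \<in> visited K"
    unfolding visited_def by (auto simp: prod_eq_iff)
  then show ?thesis by metis
qed

lemma visited_direction_unique:
  assumes K: "knot_diagram K" and "(l, q, d1) \<in> visited K" "(l, q, d2) \<in> visited K"
  shows "d1 = d2"
proof -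
  obtain t1 t2 where t: "t1 < npts K" "path K True t1 = (l, q, d1)" "t2 < npts K" "path K True t2 = (l, q, d2)"
    using assms(2,3) unfolding visited_def by auto
  then have "t1 = t2" using K unfolding knot_diagram_def inj_on_def by (metis fst_conv snd_conv lessThan_iff)
  then show ?thesis using t by simp
qed

lemma nxt_visited: assumes K: "knot_diagram K" and "s \<in> visited K" shows "nxt K s \<in> visited K"
proof -
  obtain t where t: "t < npts K" "s = path K True t" using assms(2) unfolding visited_def by auto
  show ?thesis
  proof (cases "Suc t < npts K")
    case True then show ?thesis using t unfolding visited_def by (auto simp: path_Suc[symmetric])
  next
    case False
    then have "Suc t = npts K" using t by simp
    then have "nxt K s = path K True 0" using t path_npts[OF K] by (simp add: path_Suc[symmetric] path_0)
    then show ?thesis using npts_pos[OF K] unfolding visited_def by auto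
  qed
qed

lemma visited_nxt_preimage:
  assumes K: "knot_diagram K" and "s \<in> visited K"
  shows "\<exists>s'\<in>visited K. nxt K s' = s"
proof -
  obtain t where t: "t < npts K" "s = path K True t" using assms(2) unfolding visited_def by auto
  obtain M where M: "npts K = Suc M" using npts_pos[OF K] by (cases "npts K") auto
  show ?thesis
  proof (cases t)
    case 0
    then have "nxt K (path K True M) = s" using t path_npts[OF K] M by (simp add: path_Suc[symmetric] path_0)
    then show ?thesis using M unfolding visited_def by auto
  next
    case (Suc t')
    then show ?thesis using t unfolding visited_def by (auto simp: path_Suc)
  qed
qed

lemma visited_pred_eq:
  assumes K: "knot_diagram K" and "s \<in> visited K" "nxt K s0 = s" "nxt K (flip s) = flip s0"
  shows "s0 \<in> visited K"
proof -
  obtain s' where s': "s' \<in> visited K" "nxt K s' = s" using visited_nxt_preimage[OF K assms(2)] by blast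
  have "flip s' = nxt K (flip (nxt K s'))" using nxt_flip_nxt[OF valid_state_visited[OF K s'(1)]] by simp
  then have "s' = s0" using s'(2) assms(3,4) by (metis flip_flip)
  then show ?thesis using s' by simp
qed

lemma path_False:
  assumes K: "knot_diagram K" and "t < npts K"
  shows "path K False t = flip (path K True (npts K - Suc t))"
  using assms(2)
proof (induction t)
  case 0
  obtain M where M: "npts K = Suc M" using npts_pos[OF K] by (cases "npts K") auto
  let ?s = "path K True M"
  have "nxt K ?s = (1, 0, True)" using path_npts[OF K] M by (simp add: path_Suc[symmetric] start_def)
  then have "flip ?s = nxt K (flip (1, 0, True))" using nxt_flip_nxt[OF valid_state_path[OF K], of M] by simp
  also have "\<dots> = nxt K (1, 0, False)" by simp
  also have "\<dots> = (1, 1, True)" using knot_diagram_first_piece(2)[OF K] by simp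
  finally show ?case using M by (simp add: path_0 start_def)
next
  case (Suc t)
  obtain j where j: "npts K - Suc t = Suc j" using Suc.prems by (cases "npts K - Suc t") auto
  then have j': "npts K - Suc (Suc t) = j" by simp
  have "path K False (Suc t) = nxt K (flip (path K True (Suc j)))" using Suc j by (simp add: path_Suc)
  also have "\<dots> = flip (path K True j)"
    unfolding path_Suc by (rule nxt_flip_nxt[OF valid_state_path[OF K]])
  finally show ?case using j' by simp
qed

lemma valid_state_path_any: "knot_diagram K \<Longrightarrow> t < npts K \<Longrightarrow> valid_state K (path K ori t)"
  using path_False valid_state_path by (cases ori) auto

definition chord_piece :: "piece \<Rightarrow> bool" where
  "chord_piece pc = (case pc of PCross s i \<Rightarrow> True | PAssoc s i \<Rightarrow> True | _ \<Rightarrow> False)"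

definition piece_perm :: "piece \<Rightarrow> nat \<Rightarrow> nat" where
  "piece_perm pc a = (case pc of PCross s i \<Rightarrow> swp i a | _ \<Rightarrow> a)"

lemma piece_perm_piece_perm [simp]: "piece_perm pc (piece_perm pc a) = a"
  by (cases pc) (auto simp: piece_perm_def swp_def)

lemma nxt_chord_piece_down:
  "chord_piece (K ! k) \<Longrightarrow> nxt K (k, a, True) = (Suc k, piece_perm (K ! k) a, True)"
  by (cases "K ! k") (auto simp: chord_piece_def piece_perm_def)

lemma nxt_chord_piece_up:
  "chord_piece (K ! k) \<Longrightarrow> nxt K (Suc k, piece_perm (K ! k) a, False) = (k, a, False)"
  by (cases "K ! k") (auto simp: chord_piece_def piece_perm_def swp_def)

lemma visited_across_chord_piece:
  assumes K: "knot_diagram K" and ca: "chord_piece (K ! k)"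
  shows "(k, a, d) \<in> visited K \<longleftrightarrow> (Suc k, piece_perm (K ! k) a, d) \<in> visited K"
proof -
  have down: "nxt K (k, a, True) = (Suc k, piece_perm (K ! k) a, True)"
    and up: "nxt K (Suc k, piece_perm (K ! k) a, False) = (k, a, False)"
    using nxt_chord_piece_down[OF ca] nxt_chord_piece_up[OF ca] by simp_all
  have "nxt K (flip (Suc k, piece_perm (K ! k) a, True)) = flip (k, a, True)"
    and "nxt K (flip (k, a, False)) = flip (Suc k, piece_perm (K ! k) a, False)"
    by (simp_all only: flip_simp not_True_eq_False not_False_eq_True up down)
  then have "(k, a, True) \<in> visited K \<longleftrightarrow> (Suc k, piece_perm (K ! k) a, True) \<in> visited K"
    and "(k, a, False) \<in> visited K \<longleftrightarrow> (Suc k, piece_perm (K ! k) a, False) \<in> visited K"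
    using nxt_visited[OF K] visited_pred_eq[OF K _ down] visited_pred_eq[OF K _ up] up down by metis+
  then show ?thesis by (cases d) simp_all
qed

section \<open>The Gauss word of a choice of horizontal chords\<close>

definition ends_count :: "piece list \<Rightarrow> (nat \<times> nat) list list \<Rightarrow> nat \<times> nat \<Rightarrow> nat \<times> nat \<times> bool \<Rightarrow> nat" where
  "ends_count K ws x s = count_list (map fst (ends K ws s)) x"

lemma count_list_map_fst_filter_upt:
  "count_list (map fst [((k', m'), b). m' \<leftarrow> [0..<L], P m']) (k, m) = (if k' = k \<and> m < L \<and> P m then 1 else 0)"
  by (induction L) auto

lemma ends_count_down:
  "ends_count K ws (k, m) (k', p, True) =
    (if k' = k \<and> chord_piece (K ! k) \<and> m < length (ws ! k) \<and> on_strand p (ws ! k ! m) then 1 else 0)"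
  unfolding ends_count_def
  by (cases "K ! k'") (auto simp: count_list_map_fst_filter_upt chord_piece_def)

lemma ends_count_up:
  "ends_count K ws (k, m) (Suc k', q, False) =
    (if k' = k \<and> chord_piece (K ! k) \<and> m < length (ws ! k) \<and> on_strand (piece_perm (K ! k) q) (ws ! k ! m)
     then 1 else 0)"
  unfolding ends_count_def
  by (cases "K ! k'") (auto simp: count_list_map_fst_filter_upt chord_piece_def piece_perm_def rev_map[symmetric])

lemma count_gauss_eq_sum:
  "count_list (map fst (gauss K ori ws)) x = (\<Sum>t<npts K. ends_count K ws x (path K ori t))"
proof -
  have "count_list (map fst (gauss K ori ws)) x = sum_list (map (\<lambda>t. ends_count K ws x (path K ori t)) [0..<npts K])"
    unfolding gauss_def map_concat count_list_concat ends_count_def by (simp add: comp_def)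
  then show ?thesis by (simp add: sum_list_sum_nth lessThan_atLeast0)
qed

definition orient_state :: "bool \<Rightarrow> nat \<times> nat \<times> bool \<Rightarrow> nat \<times> nat \<times> bool" where
  "orient_state ori = (if ori then id else flip)"

lemma orient_state_orient_state [simp]: "orient_state ori (orient_state ori s) = s"
  by (simp add: orient_state_def)

lemma sum_path_eq_sum_visited:
  assumes K: "knot_diagram K"
  shows "(\<Sum>t<npts K. h (path K ori t)) = (\<Sum>s\<in>visited K. h (orient_state ori s))"
proof -
  have "(\<Sum>s\<in>visited K. h (orient_state ori s)) = (\<Sum>t<npts K. h (orient_state ori (path K True t)))"
    unfolding visited_def by (simp add: sum.reindex[OF inj_on_path[OF K]])
  moreover have "(\<Sum>t<npts K. h (path K False t)) = (\<Sum>t<npts K. h (flip (path K True t)))"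
  proof -
    have "(\<Sum>t<npts K. h (path K False t)) = (\<Sum>t<npts K. h (flip (path K True (npts K - Suc t))))"
      using path_False[OF K] by (intro sum.cong) auto
    also have "\<dots> = (\<Sum>t<npts K. h (flip (path K True t)))"
      using sum.atLeastLessThan_rev[of "\<lambda>t. h (flip (path K True t))" 0 "npts K"]
      by (simp add: lessThan_atLeast0)
    finally show ?thesis .
  qed
  ultimately show ?thesis by (cases ori) (simp_all add: orient_state_def)
qed

lemma sum_visited_indicator:
  "(\<Sum>s\<in>visited K. if orient_state ori s = Z then 1 else 0 :: nat) = (if orient_state ori Z \<in> visited K then 1 else 0)"
proof -
  have "(\<Sum>s\<in>visited K. if orient_state ori s = Z then 1 else 0 :: nat) =
      (\<Sum>s\<in>visited K. if s = orient_state ori Z then 1 else 0)"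
    by (intro sum.cong refl) (metis orient_state_orient_state)
  then show ?thesis by (simp add: finite_visited)
qed

lemma visited_one_direction:
  assumes "knot_diagram K" "l \<le> length K" "q < width K l"
  shows "(if (l, q, True) \<in> visited K then 1 else 0) + (if (l, q, False) \<in> visited K then 1 else 0) = (1 :: nat)"
  using visited_level_point[OF assms] visited_direction_unique[OF assms(1), of l q True False]
  by (metis (full_types) add.commute add_0 add_0_right)

text \<open>Each endpoint of a horizontal chord of piece \<open>k\<close> is met exactly once: either on the
  way down at level \<open>k\<close> or on the way up at level \<open>k + 1\<close> (\<open>visited_across_chord_piece\<close>).\<close>
lemma count_gauss_chord:
  assumes K: "knot_diagram K" and k: "k < length K" and ca: "chord_piece (K ! k)"
    and m: "m < length (ws ! k)" and ab: "ws ! k ! m = (a, b)" "a < b" "b < width K k"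
  shows "count_list (map fst (gauss K ori ws)) (k, m) = 2"
proof -
  let ?\<sigma> = "piece_perm (K ! k)"
  let ?X1 = "(k, a, True)" and ?X2 = "(k, b, True)"
  let ?X3 = "(Suc k, ?\<sigma> a, False)" and ?X4 = "(Suc k, ?\<sigma> b, False)"
  let ?I = "\<lambda>x s. if orient_state ori s = x then 1 else 0 :: nat"
  have split: "ends_count K ws (k, m) (orient_state ori s) = ?I ?X1 s + ?I ?X2 s + ?I ?X3 s + ?I ?X4 s"
    if s: "s \<in> visited K" for s
  proof -
    have v: "valid_state K (orient_state ori s)"
      using valid_state_visited[OF K s] by (simp add: orient_state_def)
    obtain k' p d where e: "orient_state ori s = (k', p, d)" by (cases "orient_state ori s") auto
    show ?thesis
    proof (cases d)
      case True
      then show ?thesis unfolding e using ends_count_down ca m ab by (auto simp: on_strand_def)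
    next
      case False
      obtain j where j: "k' = Suc j" using valid_state_level_pos v e by (cases k') auto
      have "?\<sigma> p = a \<longleftrightarrow> p = ?\<sigma> a" "?\<sigma> p = b \<longleftrightarrow> p = ?\<sigma> b" "?\<sigma> a \<noteq> ?\<sigma> b"
        using ab(2) by (metis piece_perm_piece_perm less_irrefl)+
      then show ?thesis unfolding e j using False ends_count_up ca m ab by (auto simp: on_strand_def)
    qed
  qed
  have "count_list (map fst (gauss K ori ws)) (k, m) = (\<Sum>s\<in>visited K. ends_count K ws (k, m) (orient_state ori s))"
    unfolding count_gauss_eq_sum sum_path_eq_sum_visited[OF K] ..
  also have "\<dots> = (\<Sum>s\<in>visited K. ?I ?X1 s) + (\<Sum>s\<in>visited K. ?I ?X2 s) + (\<Sum>s\<in>visited K. ?I ?X3 s)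
      + (\<Sum>s\<in>visited K. ?I ?X4 s)"
    by (simp add: sum.distrib split cong: sum.cong)
  also have "\<dots> = 2"
    unfolding sum_visited_indicator
    using visited_one_direction[OF K, of k a] visited_one_direction[OF K, of k b] k ab
      visited_across_chord_piece[OF K ca, of a] visited_across_chord_piece[OF K ca, of b]
    by (cases ori) (simp_all add: orient_state_def)
  finally show ?thesis .
qed

definition chord_labels :: "piece list \<Rightarrow> (nat \<times> nat) list list \<Rightarrow> (nat \<times> nat) set" where
  "chord_labels K ws = (SIGMA k:{k. k < length K \<and> chord_piece (K ! k)}. {..<length (ws ! k)})"

lemma finite_chord_labels: "finite (chord_labels K ws)"
  unfolding chord_labels_def by auto

lemma card_chord_labels:
  assumes "length ws = length K" "\<forall>k<length K. \<not> chord_piece (K ! k) \<longrightarrow> ws ! k = []"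
  shows "card (chord_labels K ws) = sum_list (map length ws)"
proof -
  have "card (chord_labels K ws) = (\<Sum>k | k < length K \<and> chord_piece (K ! k). length (ws ! k))"
    unfolding chord_labels_def by (subst card_SigmaI) auto
  also have "\<dots> = (\<Sum>k<length K. if chord_piece (K ! k) then length (ws ! k) else 0)"
    by (simp add: sum.If_cases Collect_conj_eq lessThan_def Int_commute)
  also have "\<dots> = (\<Sum>k<length K. length (ws ! k))"
    using assms(2) by (intro sum.cong) auto
  finally show ?thesis using assms(1) by (simp add: sum_list_sum_nth lessThan_atLeast0)
qed

lemma set_gauss_subset_chord_labels:
  assumes K: "knot_diagram K"
  shows "set (map fst (gauss K ori ws)) \<subseteq> chord_labels K ws"
proof
  fix x assume "x \<in> set (map fst (gauss K ori ws))"
  then have "count_list (map fst (gauss K ori ws)) x \<noteq> 0" by (simp add: count_list_0_iff)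
  then obtain t where t: "t < npts K" "ends_count K ws x (path K ori t) \<noteq> 0"
    unfolding count_gauss_eq_sum by (meson lessThan_iff sum.neutral)
  obtain k m where x: "x = (k, m)" by (cases x) auto
  obtain k' p d where e: "path K ori t = (k', p, d)" by (cases "path K ori t") auto
  have v: "valid_state K (k', p, d)" using valid_state_path_any[OF K t(1), of ori] e by simp
  show "x \<in> chord_labels K ws"
  proof (cases d)
    case True
    then have "k' < length K" using valid_state_down[OF K] v by simp
    then show ?thesis using t(2) True unfolding e x chord_labels_def by (simp add: ends_count_down split: if_splits)
  next
    case False
    obtain j where j: "k' = Suc j" using valid_state_level_pos v by (cases k') auto
    then have "j < length K" using v unfolding valid_state_def by simp
    then show ?thesis using t(2) False unfolding e x j chord_labels_def by (simp add: ends_count_up split: if_splits)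
  qed
qed

lemma gm_map_inj:
  assumes "inj f"
  shows "gm (map f w) = gm w"
proof
  fix i
  have "(j < length (map f w) \<and> j \<noteq> i \<and> map f w ! j = map f w ! i) \<longleftrightarrow> (j < length w \<and> j \<noteq> i \<and> w ! j = w ! i)"
    if "i < length w" for j
    using that assms by (auto simp: inj_eq)
  then show "gm (map f w) i = gm w i" unfolding gm_def by simp
qed

text \<open>Chord diagrams of degree \<open>n\<close> are presented by Gauss words over \<open>nat\<close>; the labels
  \<open>(k, m)\<close> are transported there along \<open>prod_encode\<close>, which does not change the matching.\<close>
lemma gm_gauss_in_chord_basis:
  assumes K: "knot_diagram K" and ws: "ws \<in> choices K n"
    and triv: "\<forall>k<length K. \<not> chord_piece (K ! k) \<longrightarrow> ws ! k = []"
  shows "gm (map fst (gauss K ori ws)) \<in> chord_basis n"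
proof -
  let ?w = "map fst (gauss K ori ws)"
  have wsd: "length ws = length K" "\<And>k. k < length K \<Longrightarrow> set (ws ! k) \<subseteq> {(a, b). a < b \<and> b < width K k}"
    "sum_list (map length ws) = n"
    using ws unfolding choices_def by auto
  have twice: "count_list ?w x = 2" if x_lab: "x \<in> chord_labels K ws" for x
  proof -
    obtain k m where x: "x = (k, m)" and k: "k < length K" "chord_piece (K ! k)" "m < length (ws ! k)"
      using x_lab unfolding chord_labels_def by auto
    obtain a b where ab: "ws ! k ! m = (a, b)" by fastforce
    have "ws ! k ! m \<in> set (ws ! k)" using k(3) by simp
    then have "a < b" "b < width K k" using wsd(2)[OF k(1)] ab by auto
    then show ?thesis unfolding x using count_gauss_chord[OF K k ab] by simp
  qed
  have sub: "set ?w \<subseteq> chord_labels K ws" by (rule set_gauss_subset_chord_labels[OF K])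
  have "length ?w = (\<Sum>x\<in>chord_labels K ws. count_list ?w x)"
    using sum_count_set[OF sub finite_chord_labels] by simp
  also have "\<dots> = 2 * n" using twice card_chord_labels[OF wsd(1) triv] wsd(3) by simp
  finally have len: "length (map prod_encode ?w) = 2 * n" by simp
  have "gauss_ok (map prod_encode ?w)"
    unfolding gauss_ok_def
  proof
    fix y assume "y \<in> set (map prod_encode ?w)"
    then obtain x where "x \<in> set ?w" "y = prod_encode x" by (simp only: set_map) blast
    then show "count_list (map prod_encode ?w) y = 2"
      using twice sub count_list_map_conv[OF inj_prod_encode, of ?w x] by auto
  qed
  moreover have "gm (map prod_encode ?w) = gm ?w" by (rule gm_map_inj[OF inj_prod_encode])
  ultimately show ?thesis unfolding chord_basis_def using len by (metis (mono_tags, lifting) mem_Collect_eq)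
qed

section \<open>Denominators of \<open>I\<^sub>\<Phi>\<close>\<close>

lemma Dn_mult_Ints:
  assumes "\<And>p. prime p \<Longrightarrow> nat_coeff p n q"
  shows "q * of_nat (Dn n) \<in> \<int>"
proof (rule Ints_if_in_Zp_all_primes)
  fix p :: nat assume p: "prime p"
  obtain m where m: "Dn n = p ^ nat (bexp p n) * m" using prime_power_bexp_dvd_Dn[OF p, of n] by (elim dvdE)
  have "in_Zp p ((q * of_nat p ^ nat (bexp p n)) * of_int (int m))"
    using in_Zp_mult_of_int[OF p] assms[OF p] unfolding nat_coeff_def by blast
  then show "in_Zp p (q * of_nat (Dn n))" unfolding m by (simp add: mult.assoc)
qed

lemma in_chord_nat_if_integral:
  assumes "\<And>n. finite {f. V n f \<noteq> 0}" "\<And>n. {f. V n f \<noteq> 0} \<subseteq> chord_basis n"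
    and "\<And>n f. V n f * of_nat (Dn n) \<in> \<int>"
  shows "in_chord_nat V"
  unfolding in_chord_nat_def
proof
  fix n
  define z where "z f = \<lfloor>V n f * of_nat (Dn n)\<rfloor>" for f
  have z: "of_int (z f) = V n f * of_nat (Dn n)" for f
    using assms(3) unfolding z_def by (metis Ints_cases floor_of_int)
  then have "z f = 0 \<longleftrightarrow> V n f = 0" for f
    using Dn_pos[of n] by (metis of_int_eq_0_iff mult_eq_0_iff of_nat_0_less_iff less_irrefl)
  then have "{f. z f \<noteq> 0} = {f. V n f \<noteq> 0}" by simp
  moreover have "(\<lambda>f. V n f - of_int (z f) / of_nat (Dn n)) = (\<lambda>g. \<Sum>r\<in>{}. 0 * r g)"
    unfolding z using Dn_pos[of n] by simp
  then have "(\<lambda>f. V n f - of_int (z f) / of_nat (Dn n)) \<in> qspan chord_rels"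
    unfolding qspan_def by (intro CollectI exI[of _ "{}"] exI[of _ "\<lambda>_. 0"]) simp
  ultimately show "\<exists>z :: (nat \<Rightarrow> nat) \<Rightarrow> int. finite {f. z f \<noteq> 0} \<and> {f. z f \<noteq> 0} \<subseteq> chord_basis n \<and>
      (\<lambda>f. V n f - of_int (z f) / of_nat (Dn n)) \<in> qspan chord_rels"
    using assms(1,2)[of n] by (intro exI[of _ z]) simp
qed

lemma finite_choices: "finite (choices K n)"
proof -
  let ?A = "{..<npts K + 1} \<times> {..<npts K + 1}"
  let ?L = "{xs. set xs \<subseteq> ?A \<and> length xs \<le> n}"
  have "choices K n \<subseteq> {ws. set ws \<subseteq> ?L \<and> length ws = length K}"
  proof
    fix ws assume ws: "ws \<in> choices K n"
    have "xs \<in> ?L" if xs: "xs \<in> set ws" for xs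
    proof -
      obtain k where k: "k < length K" "xs = ws ! k"
        using xs ws unfolding choices_def by (auto simp: in_set_conv_nth)
      have "length xs \<le> n" using xs ws member_le_sum_list[of "length xs" "map length ws"]
        unfolding choices_def by auto
      moreover have "width K k \<le> npts K" unfolding npts_def using k by (intro member_le_sum) auto
      then have "set xs \<subseteq> ?A" using ws k unfolding choices_def by fastforce
      ultimately show ?thesis by simp
    qed
    then show "ws \<in> {ws. set ws \<subseteq> ?L \<and> length ws = length K}" using ws unfolding choices_def by auto
  qed
  moreover have "finite ?L" by (rule finite_lists_length_le) simp
  then have "finite {ws. set ws \<subseteq> ?L \<and> length ws = length K}" by (rule finite_lists_length_eq)
  ultimately show ?thesis by (rule finite_subset)
qed

definition choice_coeff :: "xy ser \<Rightarrow> piece list \<Rightarrow> (nat \<times> nat) list list \<Rightarrow> rat" where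
  "choice_coeff Phi K ws = (\<Prod>k<length K. dec Phi (K ! k) (ws ! k))"

lemma IPhi_eq_sum_choice_coeff:
  "IPhi Phi K ori n f = (\<Sum>ws\<in>choices K n. (-1) ^ length (filter snd (gauss K ori ws)) * choice_coeff Phi K ws *
      delta (gm (map fst (gauss K ori ws))) f)"
  unfolding IPhi_def choice_coeff_def by (simp add: ac_simps)

lemma choice_coeff_nonzero_only_chord_pieces:
  assumes "choice_coeff Phi K ws \<noteq> 0"
  shows "\<forall>k<length K. \<not> chord_piece (K ! k) \<longrightarrow> ws ! k = []"
proof (intro allI impI)
  fix k assume k: "k < length K" "\<not> chord_piece (K ! k)"
  then have "dec Phi (K ! k) (ws ! k) \<noteq> 0" using assms unfolding choice_coeff_def by simp
  with k(2) show "ws ! k = []" by (cases "K ! k") (auto simp: ser_one_def chord_piece_def split: if_splits)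
qed

lemma nat_coeff_choice_coeff:
  assumes "prime p" "natural Phi" "ws \<in> choices K n"
  shows "nat_coeff p n (choice_coeff Phi K ws)"
proof -
  have "(\<Sum>k<length K. length (ws ! k)) = n"
    using assms(3) unfolding choices_def by (auto simp: sum_list_sum_nth lessThan_atLeast0)
  moreover have "nat_coeff p (\<Sum>k<length K. length (ws ! k)) (choice_coeff Phi K ws)"
    unfolding choice_coeff_def using natural_ser_dec[OF assms(1,2)] unfolding natural_ser_def
    by (intro nat_coeff_prod[OF assms(1)]) auto
  ultimately show ?thesis by simp
qed

lemma nat_coeff_IPhi:
  assumes "prime p" "natural Phi"
  shows "nat_coeff p n (IPhi Phi K ori n f)"
  unfolding IPhi_eq_sum_choice_coeff
proof (rule nat_coeff_sum[OF assms(1)])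
  fix ws assume "ws \<in> choices K n"
  then have "nat_coeff p n (of_int ((-1) ^ length (filter snd (gauss K ori ws))) * choice_coeff Phi K ws)"
    by (intro nat_coeff_mult_of_int nat_coeff_choice_coeff assms)
  then show "nat_coeff p n ((-1) ^ length (filter snd (gauss K ori ws)) * choice_coeff Phi K ws *
      delta (gm (map fst (gauss K ori ws))) f)"
    using nat_coeff_0[OF assms(1)] by (simp add: delta_def)
qed

lemma IPhi_support:
  assumes "knot_diagram K"
  shows "{f. IPhi Phi K ori n f \<noteq> 0} \<subseteq> chord_basis n \<inter> (\<lambda>ws. gm (map fst (gauss K ori ws))) ` choices K n"
proof
  fix f assume "f \<in> {f. IPhi Phi K ori n f \<noteq> 0}"
  then obtain ws where ws: "ws \<in> choices K n"
    "(-1) ^ length (filter snd (gauss K ori ws)) * choice_coeff Phi K ws * delta (gm (map fst (gauss K ori ws))) f \<noteq> 0"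
    unfolding IPhi_eq_sum_choice_coeff by (auto elim: sum.not_neutral_contains_not_neutral)
  then have "choice_coeff Phi K ws \<noteq> 0" "f = gm (map fst (gauss K ori ws))"
    unfolding delta_def by (auto split: if_splits)
  then show "f \<in> chord_basis n \<inter> (\<lambda>ws. gm (map fst (gauss K ori ws))) ` choices K n"
    using gm_gauss_in_chord_basis[OF assms ws(1) choice_coeff_nonzero_only_chord_pieces] ws(1) by blast
qed

theorem mainTheorem9:
  fixes Phi :: "xy ser" and K :: "piece list" and ori :: bool
  assumes "is_associator1 Phi"
    and "natural Phi"
    and "knot_diagram K"
  shows "in_chord_nat (IPhi Phi K ori)"
proof (rule in_chord_nat_if_integral)
  fix n f
  show "finite {f. IPhi Phi K ori n f \<noteq> 0}"
    using IPhi_support[OF assms(3)] finite_choices by (meson finite_Int finite_imageI finite_subset)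
  show "{f. IPhi Phi K ori n f \<noteq> 0} \<subseteq> chord_basis n"
    using IPhi_support[OF assms(3)] by blast
  show "IPhi Phi K ori n f * of_nat (Dn n) \<in> \<int>"
    using Dn_mult_Ints nat_coeff_IPhi[OF _ assms(2)] by blast
qed

end
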